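(* Let $f$ be a $C^1$ diffeomorphism of $M=\mathbb{R}^d/\mathbb{Z}^d$ and let $\mathbf{x}\in M^{\mathbb{Z}}$ (not necessarily an orbit). Suppose that for some positive integer $n$ and constant $c_4>0$, for every $k\in\mathbb{Z}$ the operator $\Gamma_{S^k\mathbf{x}}$ is invertible on $X_n$ with $\|\Gamma_{S^k\mathbf{x}}^{-1}\|_n\le c_4$. Then $\Gamma_{\mathbf{x}}$ is invertible on $X_\infty$ and $$\|\Gamma_{\mathbf{x}}^{-1}\|_\infty\le \frac{2c_4d\sqrt d}{1-e^{-1/n}}.$$
   Context: For $\mathbf{x}=(x_k)\in M^{\mathbb{Z}}$, $(\Gamma_{\mathbf{x}}\eta)_k=\eta_k-Df(x_{k-1})\eta_{k-1}$ on sequences $\eta=(\eta_k)_{k\in\mathbb{Z}}$ in $\mathbb{R}^d$ (tangent spaces identified with $\mathbb{R}^d$, $|\cdot|$ Euclidean norm). $S$ is the shift $(S\mathbf{x})_k=x_{k-1}$. $\|\eta\|_n=\sup_k e^{-|k|/n}|\eta_k|$, $X_n=\{\|\eta\|_n<\infty\}$, $X_\infty$ bounded sequences with sup norm; operator norms are denoted by the same symbols. *)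

theory Defs
  imports "HOL-Analysis.Analysis"
begin

text \<open>The integer lattice Z^d inside R^d (R^d rendered as (real^'n), d = CARD('n)).\<close>
definition lattice :: "(real^'n) set" where
  "lattice = {m. \<forall>i. m $ i \<in> \<int>}"

text \<open>A C^1 diffeomorphism f of the torus R^d/Z^d, given by a C^1 lift F of f
  (derivative DF) and a C^1 lift G of f^{-1} (derivative DG).\<close>
definition torus_C1_diffeo ::
  "((real^'n) \<Rightarrow> (real^'n)) \<Rightarrow> ((real^'n) \<Rightarrow> ((real^'n) \<Rightarrow>\<^sub>L (real^'n))) \<Rightarrow>
   ((real^'n) \<Rightarrow> (real^'n)) \<Rightarrow> ((real^'n) \<Rightarrow> ((real^'n) \<Rightarrow>\<^sub>L (real^'n))) \<Rightarrow> bool" where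
  "torus_C1_diffeo F DF G DG \<longleftrightarrow>
     (\<forall>x. (F has_derivative blinfun_apply (DF x)) (at x)) \<and> continuous_on UNIV DF \<and>
     (\<forall>x. (G has_derivative blinfun_apply (DG x)) (at x)) \<and> continuous_on UNIV DG \<and>
     (\<forall>x m. m \<in> lattice \<longrightarrow> F (x + m) - F x \<in> lattice) \<and>
     (\<forall>x m. m \<in> lattice \<longrightarrow> G (x + m) - G x \<in> lattice) \<and>
     (\<forall>x. G (F x) - x \<in> lattice) \<and> (\<forall>y. F (G y) - y \<in> lattice)"

text \<open>Shift: (S x)_k = x_{k-1}; hence (S^k x)_j = x_{j-k}.\<close>
definition shiftp :: "int \<Rightarrow> (int \<Rightarrow> 'a) \<Rightarrow> (int \<Rightarrow> 'a)" where
  "shiftp k x = (\<lambda>j. x (j - k))"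

definition Gamma ::
  "('a \<Rightarrow> ((real^'n) \<Rightarrow>\<^sub>L (real^'n))) \<Rightarrow> (int \<Rightarrow> 'a) \<Rightarrow> (int \<Rightarrow> (real^'n)) \<Rightarrow> (int \<Rightarrow> (real^'n))" where
  "Gamma Df x \<eta> = (\<lambda>k. \<eta> k - Df (x (k - 1)) (\<eta> (k - 1)))"

definition Xn :: "nat \<Rightarrow> (int \<Rightarrow> (real^'n)) set" where
  "Xn n = {\<eta>. bdd_above (range (\<lambda>k. exp (- \<bar>real_of_int k\<bar> / real n) * norm (\<eta> k)))}"

definition normn :: "nat \<Rightarrow> (int \<Rightarrow> (real^'n)) \<Rightarrow> real" where
  "normn n \<eta> = (SUP k. exp (- \<bar>real_of_int k\<bar> / real n) * norm (\<eta> k))"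

definition Xinf :: "(int \<Rightarrow> (real^'n)) set" where
  "Xinf = {\<eta>. bdd_above (range (\<lambda>k. norm (\<eta> k)))}"

definition norminf :: "(int \<Rightarrow> (real^'n)) \<Rightarrow> real" where
  "norminf \<eta> = (SUP k. norm (\<eta> k))"

text \<open>T is invertible on the normed space (X, N) with ||T^{-1}|| <= C:
  T is a bijection of X onto X and N(T^{-1} xi) <= C N(xi), i.e. N(eta) <= C N(T eta).\<close>
definition inv_bound_on ::
  "('b set) \<Rightarrow> ('b \<Rightarrow> real) \<Rightarrow> ('b \<Rightarrow> 'b) \<Rightarrow> real \<Rightarrow> bool" where
  "inv_bound_on X N T C \<longleftrightarrow> bij_betw T X X \<and> (\<forall>\<eta>\<in>X. N \<eta> \<le> C * N (T \<eta>))"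

end

theory Submission
  imports Defs
begin

(* The operator Gamma commutes with the shift: shifting the base
   sequence x and the argument eta by k shifts Gamma x eta by k.  Hence the
   uniform bound on Gamma(S^k x)^{-1} in the weighted space X_n, evaluated at
   the origin where the weight equals 1, gives for every coordinate m
       |eta_m| <= c4 * ||Gamma x eta||_inf,
   because the weighted norm of a shifted bounded sequence never exceeds its
   sup norm.  So Gamma x is injective with inverse bound c4 (and a fortiori with
   the paper's larger constant) on bounded sequences, and every eta in X_n with
   bounded image is itself bounded.  It remains to see that Gamma x maps bounded
   sequences to bounded ones: since Gamma x maps X_n into itself, testing it on
   the sequences e^{|j|/n} b (b a basis vector) shows that the coefficients
   Df(x_j) are uniformly bounded.  Surjectivity on X_inf then follows from
   surjectivity on X_n. *)

lemma weight_shift_le: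
  "exp (- \<bar>real_of_int j\<bar> / real n) * exp (\<bar>real_of_int (j + m)\<bar> / real n)
     \<le> exp (\<bar>real_of_int m\<bar> / real n)"
proof -
  have "- \<bar>real_of_int j\<bar> / real n + \<bar>real_of_int (j + m)\<bar> / real n \<le> \<bar>real_of_int m\<bar> / real n"
    by (cases "n = 0") (simp_all add: divide_simps)
  then show ?thesis by (simp add: exp_add[symmetric])
qed

lemma weight_step_ge:
  "exp (- 1 / real n) \<le> exp (- \<bar>real_of_int k\<bar> / real n) * exp (\<bar>real_of_int (k - 1)\<bar> / real n)"
proof -
  have "- 1 / real n \<le> - \<bar>real_of_int k\<bar> / real n + \<bar>real_of_int (k - 1)\<bar> / real n"
    by (cases "n = 0") (simp_all add: divide_simps)
  then show ?thesis by (simp add: exp_add[symmetric])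
qed

lemma Xn_shift:
  assumes "\<eta> \<in> Xn n"
  shows "shiftp k \<eta> \<in> Xn n"
proof -
  obtain B where B: "\<And>j. exp (- \<bar>real_of_int j\<bar> / real n) * norm (\<eta> j) \<le> B"
    using assms unfolding Xn_def bdd_above_def by auto
  have "exp (- \<bar>real_of_int j\<bar> / real n) * norm (shiftp k \<eta> j) \<le> exp (\<bar>real_of_int (-k)\<bar> / real n) * B"
    for j
  proof -
    have "exp (- \<bar>real_of_int j\<bar> / real n) * norm (shiftp k \<eta> j)
        = (exp (- \<bar>real_of_int j\<bar> / real n) * exp (\<bar>real_of_int (j + -k)\<bar> / real n))
          * (exp (- \<bar>real_of_int (j - k)\<bar> / real n) * norm (\<eta> (j - k)))"
      by (simp add: shiftp_def exp_minus field_simps)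
    also have "\<dots> \<le> exp (\<bar>real_of_int (-k)\<bar> / real n) * B"
      by (rule mult_mono[OF weight_shift_le B]) auto
    finally show ?thesis .
  qed
  then show ?thesis unfolding Xn_def mem_Collect_eq by (rule bdd_aboveI2)
qed

lemma Xinf_subset_Xn: "Xinf \<subseteq> Xn n"
proof
  fix \<eta> :: "int \<Rightarrow> real^'n" assume "\<eta> \<in> Xinf"
  then obtain B where B: "\<And>j. norm (\<eta> j) \<le> B"
    unfolding Xinf_def bdd_above_def by auto
  have "exp (- \<bar>real_of_int j\<bar> / real n) * norm (\<eta> j) \<le> 1 * B" for j
    by (rule mult_mono[OF _ B]) auto
  then show "\<eta> \<in> Xn n" unfolding Xn_def mem_Collect_eq by (intro bdd_aboveI2) simp
qed

text \<open>The weight at the origin is 1, so the origin coordinate is controlled by the weighted norm.\<close>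
lemma norm_at_0_le_normn:
  assumes "\<eta> \<in> Xn n"
  shows "norm (\<eta> 0) \<le> normn n \<eta>"
proof -
  have "exp (- \<bar>real_of_int (0::int)\<bar> / real n) * norm (\<eta> 0) \<le> normn n \<eta>"
    unfolding normn_def using assms unfolding Xn_def by (intro cSUP_upper) auto
  then show ?thesis by simp
qed

lemma norm_le_norminf:
  assumes "\<xi> \<in> Xinf"
  shows "norm (\<xi> j) \<le> norminf \<xi>"
  using assms unfolding Xinf_def norminf_def by (intro cSUP_upper) auto

lemma norminf_nonneg: "\<xi> \<in> Xinf \<Longrightarrow> 0 \<le> norminf \<xi>"
  using norm_le_norminf[of \<xi> 0] norm_ge_zero order_trans by blast

text \<open>Weights are at most 1, so no shift of a bounded sequence has weighted norm above its sup norm.\<close>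
lemma normn_shift_le_norminf:
  assumes "\<xi> \<in> Xinf"
  shows "normn n (shiftp k \<xi>) \<le> norminf \<xi>"
  unfolding normn_def
proof (rule cSUP_least)
  fix j
  have "exp (- \<bar>real_of_int j\<bar> / real n) * norm (shiftp k \<xi> j) \<le> norm (\<xi> (j - k))"
    by (auto simp: shiftp_def intro!: mult_left_le_one_le)
  also have "\<dots> \<le> norminf \<xi>" by (rule norm_le_norminf[OF assms])
  finally show "exp (- \<bar>real_of_int j\<bar> / real n) * norm (shiftp k \<xi> j) \<le> norminf \<xi>" .
qed simp

lemma Gamma_shift:
  "Gamma Df (shiftp k x) (shiftp k \<eta>) = shiftp k (Gamma Df x \<eta>)"
  by (simp add: Gamma_def shiftp_def algebra_simps)

text \<open>If Gamma_x maps X_n into itself, its coefficients Df(x_j) are uniformly bounded on each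
  basis vector b: test Gamma_x on the sequence e^{|j|/n} b, whose weighted norm is 1.\<close>
lemma Gamma_coeff_basis_bounded:
  fixes Df :: "'a \<Rightarrow> ((real^'n) \<Rightarrow>\<^sub>L (real^'n))"
  assumes maps: "Gamma Df x ` Xn n \<subseteq> Xn n" and b: "b \<in> Basis"
  shows "\<exists>K. \<forall>j. norm (Df (x j) b) \<le> K"
proof -
  define \<eta> :: "int \<Rightarrow> real^'n" where "\<eta> = (\<lambda>j. exp (\<bar>real_of_int j\<bar> / real n) *\<^sub>R b)"
  have weighted_one: "exp (- \<bar>real_of_int j\<bar> / real n) * norm (\<eta> j) = 1" for j
    using b by (simp add: \<eta>_def exp_add[symmetric])
  then have "\<eta> \<in> Xn n" unfolding Xn_def by simp
  with maps obtain B where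
    B: "\<And>k. exp (- \<bar>real_of_int k\<bar> / real n) * norm (\<eta> k - Df (x (k - 1)) (\<eta> (k - 1))) \<le> B"
    unfolding Xn_def bdd_above_def Gamma_def by blast
  have "norm (Df (x j) b) \<le> (1 + B) / exp (- 1 / real n)" for j
  proof -
    let ?w = "exp (- \<bar>real_of_int (j + 1)\<bar> / real n)"
    have "norm (Df (x j) (\<eta> j)) \<le> norm (\<eta> (j + 1)) + norm (\<eta> (j + 1) - Df (x j) (\<eta> j))"
      by (metis norm_triangle_sub add.commute norm_minus_commute)
    then have "?w * norm (Df (x j) (\<eta> j)) \<le> ?w * norm (\<eta> (j + 1)) + ?w * norm (\<eta> (j + 1) - Df (x j) (\<eta> j))"
      by (simp add: distrib_left[symmetric] mult_left_mono)
    also have "\<dots> \<le> 1 + B" using weighted_one[of "j + 1"] B[of "j + 1"] by simp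
    finally have image_bound: "?w * norm (Df (x j) (\<eta> j)) \<le> 1 + B" .
    have "?w * norm (Df (x j) (\<eta> j)) = (?w * exp (\<bar>real_of_int (j + 1 - 1)\<bar> / real n)) * norm (Df (x j) b)"
      by (simp add: \<eta>_def blinfun.scaleR_right)
    moreover have "exp (- 1 / real n) * norm (Df (x j) b)
        \<le> (?w * exp (\<bar>real_of_int (j + 1 - 1)\<bar> / real n)) * norm (Df (x j) b)"
      by (rule mult_right_mono[OF weight_step_ge]) simp
    ultimately have "exp (- 1 / real n) * norm (Df (x j) b) \<le> 1 + B" using image_bound by linarith
    then show ?thesis by (simp add: field_simps)
  qed
  then show ?thesis by blast
qed

lemma Gamma_coeff_bounded:
  fixes Df :: "'a \<Rightarrow> ((real^'n) \<Rightarrow>\<^sub>L (real^'n))"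
  assumes maps: "Gamma Df x ` Xn n \<subseteq> Xn n"
  shows "\<exists>K. \<forall>j. norm (Df (x j)) \<le> K"
proof -
  obtain K where K: "\<And>b j. b \<in> Basis \<Longrightarrow> norm (Df (x j) b) \<le> K b"
    using Gamma_coeff_basis_bounded[OF maps] by metis
  have "norm (Df (x j)) \<le> (\<Sum>b\<in>Basis. K b)" for j
  proof -
    have "norm (Df (x j)) \<le> (\<Sum>b\<in>Basis. norm (Df (x j) b))"
      by (rule norm_blinfun_euclidean_le)
    also have "\<dots> \<le> (\<Sum>b\<in>Basis. K b)" by (rule sum_mono) (rule K)
    finally show ?thesis .
  qed
  then show ?thesis by blast
qed

lemma Gamma_maps_Xinf:
  fixes Df :: "'a \<Rightarrow> ((real^'n) \<Rightarrow>\<^sub>L (real^'n))"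
  assumes K: "\<And>j. norm (Df (x j)) \<le> K" and e: "\<eta> \<in> Xinf"
  shows "Gamma Df x \<eta> \<in> Xinf"
proof -
  obtain M where M: "\<And>j. norm (\<eta> j) \<le> M"
    using e unfolding Xinf_def bdd_above_def by auto
  have "norm (Gamma Df x \<eta> k) \<le> M + K * M" for k
  proof -
    have "norm (Df (x (k - 1)) (\<eta> (k - 1))) \<le> norm (Df (x (k - 1))) * norm (\<eta> (k - 1))"
      by (rule norm_blinfun)
    also have "\<dots> \<le> K * M"
      by (rule mult_mono[OF K M]) (use order_trans[OF norm_ge_zero K[of 0]] in auto)
    finally have "norm (Df (x (k - 1)) (\<eta> (k - 1))) \<le> K * M" .
    then show ?thesis
      unfolding Gamma_def using norm_triangle_ineq4[of "\<eta> k" "Df (x (k - 1)) (\<eta> (k - 1))"] M[of k] by linarith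
  qed
  then show ?thesis unfolding Xinf_def mem_Collect_eq by (rule bdd_aboveI2)
qed

text \<open>The central estimate: the uniform inverse bounds for all shifts of x control every
  coordinate of eta by the sup norm of Gamma_x eta (evaluate the bound for S^{-m} x at the origin).\<close>
lemma Gamma_pointwise_bound:
  assumes inv: "\<forall>k. inv_bound_on (Xn n) (normn n) (Gamma Df (shiftp k x)) c"
    and c: "c \<ge> 0" and e: "\<eta> \<in> Xn n" and g: "Gamma Df x \<eta> \<in> Xinf"
  shows "norm (\<eta> m) \<le> c * norminf (Gamma Df x \<eta>)"
proof -
  have e': "shiftp (-m) \<eta> \<in> Xn n" by (rule Xn_shift[OF e])
  have "norm (\<eta> m) = norm (shiftp (-m) \<eta> 0)" by (simp add: shiftp_def)
  also have "\<dots> \<le> normn n (shiftp (-m) \<eta>)" by (rule norm_at_0_le_normn[OF e'])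
  also have "\<dots> \<le> c * normn n (Gamma Df (shiftp (-m) x) (shiftp (-m) \<eta>))"
    using inv e' unfolding inv_bound_on_def by blast
  also have "\<dots> = c * normn n (shiftp (-m) (Gamma Df x \<eta>))" by (simp add: Gamma_shift)
  also have "\<dots> \<le> c * norminf (Gamma Df x \<eta>)"
    using normn_shift_le_norminf[OF g] c by (simp add: mult_left_mono)
  finally show ?thesis .
qed

lemma Gamma_inverse_bound_inf:
  assumes inv: "\<forall>k. inv_bound_on (Xn n) (normn n) (Gamma Df (shiftp k x)) c"
    and c: "c \<ge> 0" and e: "\<eta> \<in> Xn n" and g: "Gamma Df x \<eta> \<in> Xinf"
  shows "\<eta> \<in> Xinf" and "norminf \<eta> \<le> c * norminf (Gamma Df x \<eta>)"
proof -
  note pointwise = Gamma_pointwise_bound[OF inv c e g]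
  show "\<eta> \<in> Xinf" unfolding Xinf_def mem_Collect_eq by (rule bdd_aboveI2[OF pointwise])
  show "norminf \<eta> \<le> c * norminf (Gamma Df x \<eta>)"
    unfolding norminf_def[of \<eta>] by (rule cSUP_least) (simp_all add: pointwise)
qed

lemma bij_betw_restrict_invariant:
  assumes bij: "bij_betw T Y Y" and sub: "X \<subseteq> Y" and maps: "T ` X \<subseteq> X"
    and preimage: "\<And>y. y \<in> Y \<Longrightarrow> T y \<in> X \<Longrightarrow> y \<in> X"
  shows "bij_betw T X X"
  unfolding bij_betw_def
proof
  show "inj_on T X" using bij_betw_imp_inj_on[OF bij] sub inj_on_subset by blast
  have "X \<subseteq> T ` X"
  proof
    fix z assume "z \<in> X"
    then obtain y where "y \<in> Y" "z = T y" using bij sub unfolding bij_betw_def by blast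
    then show "z \<in> T ` X" using preimage \<open>z \<in> X\<close> by blast
  qed
  then show "T ` X = X" using maps by blast
qed

lemma inv_bound_on_mono:
  assumes "inv_bound_on X N T c" "c \<le> C" "\<And>\<eta>. \<eta> \<in> X \<Longrightarrow> 0 \<le> N (T \<eta>)"
  shows "inv_bound_on X N T C"
  using assms unfolding inv_bound_on_def by (meson mult_right_mono order_trans)

text \<open>The paper's constant dominates c4, since 2 d sqrt d \<ge> 1 \<ge> 1 - e^{-1/n} > 0.\<close>
lemma paper_constant_ge:
  assumes "n > 0" "c \<ge> 0" "d \<ge> 1"
  shows "c \<le> 2 * c * d * sqrt d / (1 - exp (- 1 / real n))"
proof -
  have e: "0 < 1 - exp (- 1 / real n)" "1 - exp (- 1 / real n) \<le> 1"
    using assms(1) by auto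
  have "1 \<le> d * sqrt d" using assms(3) mult_mono[of 1 d 1 "sqrt d"] by simp
  then have "c * (1 - exp (- 1 / real n)) \<le> c * (2 * d * sqrt d)"
    using e assms(2) by (intro mult_left_mono) linarith+
  then show ?thesis using e by (simp add: pos_le_divide_eq mult.assoc)
qed

theorem lemma2p3:
  fixes F G :: "(real^'n) \<Rightarrow> (real^'n)"
    and DF DG :: "(real^'n) \<Rightarrow> ((real^'n) \<Rightarrow>\<^sub>L (real^'n))"
    and x :: "int \<Rightarrow> (real^'n)"
    and n :: nat and c4 :: real
  assumes "torus_C1_diffeo F DF G DG"
    and "n > 0" and "c4 > 0"
    and "\<forall>k::int. inv_bound_on (Xn n) (normn n) (Gamma DF (shiftp k x)) c4"
  shows "inv_bound_on Xinf norminf (Gamma DF x)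
           (2 * c4 * real CARD('n) * sqrt (real CARD('n)) / (1 - exp (- 1 / real n)))"
proof -
  note inv = assms(4) and c4 = less_imp_le[OF assms(3)]
  have "shiftp 0 x = x" by (simp add: shiftp_def)
  then have bij_Xn: "bij_betw (Gamma DF x) (Xn n) (Xn n)"
    using inv[rule_format, of 0] unfolding inv_bound_on_def by simp
  then obtain K where "\<And>j. norm (DF (x j)) \<le> K"
    using Gamma_coeff_bounded[of DF x n] bij_betw_imp_surj_on by blast
  then have maps: "\<And>\<eta>. \<eta> \<in> Xinf \<Longrightarrow> Gamma DF x \<eta> \<in> Xinf" by (rule Gamma_maps_Xinf)
  have "bij_betw (Gamma DF x) Xinf Xinf"
  proof (rule bij_betw_restrict_invariant[OF bij_Xn Xinf_subset_Xn])
    show "Gamma DF x ` Xinf \<subseteq> Xinf" using maps by blast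
    show "\<eta> \<in> Xinf" if "\<eta> \<in> Xn n" "Gamma DF x \<eta> \<in> Xinf" for \<eta>
      by (rule Gamma_inverse_bound_inf(1)[OF inv c4 that])
  qed
  moreover have "norminf \<eta> \<le> c4 * norminf (Gamma DF x \<eta>)" if "\<eta> \<in> Xinf" for \<eta>
    by (rule Gamma_inverse_bound_inf(2)[OF inv c4 subsetD[OF Xinf_subset_Xn that] maps[OF that]])
  ultimately have "inv_bound_on Xinf norminf (Gamma DF x) c4"
    unfolding inv_bound_on_def by blast
  moreover have "c4 \<le> 2 * c4 * real CARD('n) * sqrt (real CARD('n)) / (1 - exp (- 1 / real n))"
    by (rule paper_constant_ge[OF assms(2) c4]) simp
  ultimately show ?thesis
    by (rule inv_bound_on_mono) (rule norminf_nonneg[OF maps])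
qed

end
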